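(* Let $G$ be a scheduling game on $m\ge2$ identical machines of common speed $s>0$ with arbitrary priority lists, in which every job $i$ has negative deterioration $p_i(t)=\max\{\tau_i,b_i-a_it\}$ with $0\le a_i\le s$ (all jobs delay-averse). Then every pure Nash equilibrium $\sigma$ of $G$ satisfies $C_{\max}(\sigma)\le\left(3-\frac1m\right)OPT(G)$; i.e., $PoA({\cal G}^{-DA}_P)\le 3-\frac1m$.
   Context: Scheduling game: a finite set $N$ of $n$ jobs (players) and a set $M$ of $m$ machines. Machine $j$ has speed $s_j>0$ and a priority list $\pi_j$, a bijection $N\to\{1,\dots,n\}$; job $u$ has higher priority than $v$ on $j$ iff $\pi_j(u)<\pi_j(v)$. Negative deterioration: $p_i(t)=\max\{\tau_i,b_i-a_it\}$ with $b_i,a_i\ge0$, $\tau_i>0$. A profile $\sigma\in M^N$ assigns each job to a machine. On machine $j$, the jobs assigned to it, listed in increasing $\pi_j$-order as $i_1,i_2,\dots$, are processed without idle time: $S_{i_1}(\sigma)=0$, $C_{i_k}(\sigma)=S_{i_k}(\sigma)+p_{i_k}(S_{i_k}(\sigma))/s_j$, $S_{i_{k+1}}(\sigma)=C_{i_k}(\sigma)$. The cost of job $i$ is $C_i(\sigma)$. A pure Nash equilibrium (NE) is a profile in which no job can strictly decrease its completion time by unilaterally changing its machine. Makespan $C_{\max}(\sigma)=\max_iC_i(\sigma)$; $OPT(G)=\min_\sigma C_{\max}(\sigma)$ over all profiles. ${\cal G}^{-DA}_P$ denotes the class of all games described in the claim, and its PoA is the supremum over its games of $\max_{\sigma\text{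 NE}}C_{\max}(\sigma)/OPT(G)$. *)

theory Defs
  imports Complex_Main "HOL-Library.FuncSet"
begin

text \<open>Scheduling game data: jobs N :: 'j set, machines M :: 'm set,
 speeds s :: 'm => real, priority lists pi :: 'm => 'j => nat
 (pi j a bijection N -> {1..n}), processing-time functions p :: 'j => real => real.\<close>

definition neg_det :: "real \<Rightarrow> real \<Rightarrow> real \<Rightarrow> real \<Rightarrow> real" where
  "neg_det \<tau> b a t = max \<tau> (b - a * t)"

definition prio_list :: "'j set \<Rightarrow> ('m \<Rightarrow> 'j \<Rightarrow> nat) \<Rightarrow> 'm \<Rightarrow> 'j list" where
  "prio_list N \<pi> j = map (the_inv_into N (\<pi> j)) [1..<card N + 1]"

definition machine_seq :: "'j set \<Rightarrow> ('m \<Rightarrow> 'j \<Rightarrow> nat) \<Rightarrow> ('j \<Rightarrow> 'm) \<Rightarrow> 'm \<Rightarrow> 'j list" where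
  "machine_seq N \<pi> \<sigma> j = filter (\<lambda>i. \<sigma> i = j) (prio_list N \<pi> j)"

fun run :: "('j \<Rightarrow> real \<Rightarrow> real) \<Rightarrow> real \<Rightarrow> real \<Rightarrow> 'j list \<Rightarrow> real" where
  "run p v t [] = t"
| "run p v t (i # is) = run p v (t + p i t / v) is"

definition completion ::
  "'j set \<Rightarrow> ('m \<Rightarrow> real) \<Rightarrow> ('m \<Rightarrow> 'j \<Rightarrow> nat) \<Rightarrow> ('j \<Rightarrow> real \<Rightarrow> real) \<Rightarrow> ('j \<Rightarrow> 'm) \<Rightarrow> 'j \<Rightarrow> real" where
  "completion N s \<pi> p \<sigma> i =
     run p (s (\<sigma> i)) 0 (takeWhile (\<lambda>k. k \<noteq> i) (machine_seq N \<pi> \<sigma> (\<sigma> i)) @ [i])"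

definition profiles :: "'j set \<Rightarrow> 'm set \<Rightarrow> ('j \<Rightarrow> 'm) set" where
  "profiles N M = N \<rightarrow>\<^sub>E M"

definition makespan ::
  "'j set \<Rightarrow> ('m \<Rightarrow> real) \<Rightarrow> ('m \<Rightarrow> 'j \<Rightarrow> nat) \<Rightarrow> ('j \<Rightarrow> real \<Rightarrow> real) \<Rightarrow> ('j \<Rightarrow> 'm) \<Rightarrow> real" where
  "makespan N s \<pi> p \<sigma> = Max (insert 0 (completion N s \<pi> p \<sigma> ` N))"

definition OPT ::
  "'j set \<Rightarrow> 'm set \<Rightarrow> ('m \<Rightarrow> real) \<Rightarrow> ('m \<Rightarrow> 'j \<Rightarrow> nat) \<Rightarrow> ('j \<Rightarrow> real \<Rightarrow> real) \<Rightarrow> real" where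
  "OPT N M s \<pi> p = Min (makespan N s \<pi> p ` profiles N M)"

definition is_NE ::
  "'j set \<Rightarrow> 'm set \<Rightarrow> ('m \<Rightarrow> real) \<Rightarrow> ('m \<Rightarrow> 'j \<Rightarrow> nat) \<Rightarrow> ('j \<Rightarrow> real \<Rightarrow> real) \<Rightarrow> ('j \<Rightarrow> 'm) \<Rightarrow> bool" where
  "is_NE N M s \<pi> p \<sigma> \<longleftrightarrow> \<sigma> \<in> profiles N M \<and>
     (\<forall>i\<in>N. \<forall>j\<in>M. completion N s \<pi> p \<sigma> i \<le> completion N s \<pi> p (\<sigma>(i := j)) i)"

end

theory Submission
  imports Defs
begin

text \<open>Fix an optimal profile with makespan OPT and weigh each job i by g i = p i OPT / s, its
  processing time when started at time OPT. Processing times only shrink over time, so each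
  machine of the optimal profile spends at least the g-weight of its jobs before OPT; hence
  \<Sum>g \<le> m OPT and g k \<le> OPT. Conversely, as a i \<le> s, no job finishes earlier by starting later,
  so a sequence of jobs started at time 0 is done by OPT plus its g-weight. Deviating to a machine j,
  job k would thus finish by OPT + g k + the g-weight of the other jobs that \<sigma> puts on j.
  Summing the equilibrium inequalities over all m machines gives
  m C k \<le> m OPT + \<Sum>g + (m - 1) g k \<le> (3 m - 1) OPT.\<close>

lemma run_ge_start:
  assumes "0 < v" and "\<And>i t. i \<in> set xs \<Longrightarrow> 0 \<le> p i t"
  shows "t \<le> run p v t xs"
  using assms(2)
proof (induction xs arbitrary: t)
  case (Cons i xs)
  have "t \<le> t + p i t / v"
    using Cons.prems \<open>0 < v\<close> by simp
  also have "\<dots> \<le> run p v (t + p i t / v) xs"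
    using Cons by simp
  finally show ?case by simp
qed simp

lemma run_le_max_plus_sum:
  assumes "0 < v"
    and nonneg: "\<And>i t. i \<in> set xs \<Longrightarrow> 0 \<le> p i t"
    and antimono: "\<And>i. i \<in> set xs \<Longrightarrow> antimono (p i)"
    and mono: "\<And>i. i \<in> set xs \<Longrightarrow> mono (\<lambda>t. t + p i t / v)"
  shows "run p v t xs \<le> max t T + (\<Sum>i\<leftarrow>xs. p i T / v)"
  using nonneg antimono mono
proof (induction xs arbitrary: t)
  case (Cons i xs)
  have step: "max (t + p i t / v) T \<le> max t T + p i T / v"
  proof (cases "t \<le> T")
    case True
    moreover have "mono (\<lambda>t. t + p i t / v)"
      using Cons.prems(3) by simp
    ultimately have "t + p i t / v \<le> T + p i T / v"
      by (auto dest: monoD)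
    moreover have "0 \<le> p i T / v"
      using Cons.prems(1) \<open>0 < v\<close> by simp
    ultimately show ?thesis
      using True by linarith
  next
    case False
    then have "p i t / v \<le> p i T / v"
      using Cons.prems(2) \<open>0 < v\<close> by (simp add: antimonoD divide_right_mono)
    moreover have "0 \<le> p i T / v"
      using Cons.prems(1) \<open>0 < v\<close> by simp
    ultimately show ?thesis
      using False by simp
  qed
  have "run p v t (i # xs) \<le> max (t + p i t / v) T + (\<Sum>i\<leftarrow>xs. p i T / v)"
    using Cons by simp
  also have "\<dots> \<le> max t T + p i T / v + (\<Sum>i\<leftarrow>xs. p i T / v)"
    using step by (rule add_right_mono)
  finally show ?case
    by (simp add: add.assoc)
qed simp

lemma sum_le_run:
  assumes "0 < v"
    and nonneg: "\<And>i t. i \<in> set xs \<Longrightarrow> 0 \<le> p i t"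
    and antimono: "\<And>i. i \<in> set xs \<Longrightarrow> antimono (p i)"
    and "run p v t xs \<le> T"
  shows "t + (\<Sum>i\<leftarrow>xs. p i T / v) \<le> run p v t xs"
  using nonneg antimono assms(4)
proof (induction xs arbitrary: t)
  case (Cons i xs)
  let ?t' = "t + p i t / v"
  have "t \<le> ?t'"
    using Cons.prems(1) \<open>0 < v\<close> by simp
  also have "\<dots> \<le> run p v ?t' xs"
    using Cons.prems(1) \<open>0 < v\<close> by (intro run_ge_start) auto
  also have "\<dots> \<le> T"
    using Cons.prems(3) by simp
  finally have "p i T / v \<le> p i t / v"
    using Cons.prems(2) \<open>0 < v\<close> by (simp add: antimonoD divide_right_mono)
  moreover have "?t' + (\<Sum>i\<leftarrow>xs. p i T / v) \<le> run p v ?t' xs"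
    using Cons by simp
  ultimately show ?case by simp
qed simp

lemma neg_det_nonneg: "0 \<le> \<tau> \<Longrightarrow> 0 \<le> neg_det \<tau> b a t"
  by (simp add: neg_det_def)

lemma antimono_neg_det:
  assumes "0 \<le> a"
  shows "antimono (neg_det \<tau> b a)"
proof (rule antimonoI)
  fix t t' :: real
  assume "t \<le> t'"
  then have "a * t \<le> a * t'"
    using assms by (rule mult_left_mono)
  then show "neg_det \<tau> b a t' \<le> neg_det \<tau> b a t"
    unfolding neg_det_def by linarith
qed

lemma mono_completion_neg_det:
  assumes "0 < v" and "a \<le> v"
  shows "mono (\<lambda>t. t + neg_det \<tau> b a t / v)"
proof (rule monoI)
  fix t t' :: real
  assume "t \<le> t'"
  then have "(v - a) * t \<le> (v - a) * t'" and "v * t \<le> v * t'"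
    using assms by (simp_all add: mult_left_mono)
  then have "v * t + neg_det \<tau> b a t \<le> v * t' + neg_det \<tau> b a t'"
    by (simp add: neg_det_def algebra_simps)
  then have "(v * t + neg_det \<tau> b a t) / v \<le> (v * t' + neg_det \<tau> b a t') / v"
    using assms(1) by (simp add: divide_right_mono)
  then show "t + neg_det \<tau> b a t / v \<le> t' + neg_det \<tau> b a t' / v"
    using assms(1) by (simp add: add_divide_distrib)
qed

definition priority_lists :: "'j set \<Rightarrow> 'm set \<Rightarrow> ('m \<Rightarrow> 'j \<Rightarrow> nat) \<Rightarrow> bool" where
  "priority_lists N M \<pi> \<longleftrightarrow> (\<forall>j\<in>M. bij_betw (\<pi> j) N {1..card N})"

lemma bij_betw_the_inv_into_priority:
  assumes "priority_lists N M \<pi>" and "j \<in> M"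
  shows "bij_betw (the_inv_into N (\<pi> j)) {1..card N} N"
  using assms unfolding priority_lists_def by (blast intro: bij_betw_the_inv_into)

lemma set_prio_list:
  assumes "priority_lists N M \<pi>" and "j \<in> M"
  shows "set (prio_list N \<pi> j) = N"
proof -
  have "{1..<card N + 1} = {1..card N}"
    by auto
  then show ?thesis
    unfolding prio_list_def set_map set_upt
    using bij_betw_imp_surj_on[OF bij_betw_the_inv_into_priority[OF assms]] by simp
qed

lemma distinct_prio_list:
  assumes "priority_lists N M \<pi>" and "j \<in> M"
  shows "distinct (prio_list N \<pi> j)"
proof -
  have "{1..<card N + 1} = {1..card N}"
    by auto
  then show ?thesis
    unfolding prio_list_def distinct_map set_upt
    using bij_betw_imp_inj_on[OF bij_betw_the_inv_into_priority[OF assms]] by simp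
qed

lemma set_machine_seq:
  "priority_lists N M \<pi> \<Longrightarrow> j \<in> M \<Longrightarrow> set (machine_seq N \<pi> \<sigma> j) = {i \<in> N. \<sigma> i = j}"
  by (auto simp: machine_seq_def set_prio_list)

lemma distinct_machine_seq:
  "priority_lists N M \<pi> \<Longrightarrow> j \<in> M \<Longrightarrow> distinct (machine_seq N \<pi> \<sigma> j)"
  by (simp add: machine_seq_def distinct_prio_list)

definition predecessors :: "'j set \<Rightarrow> ('m \<Rightarrow> 'j \<Rightarrow> nat) \<Rightarrow> ('j \<Rightarrow> 'm) \<Rightarrow> 'j \<Rightarrow> 'j list" where
  "predecessors N \<pi> \<sigma> i = takeWhile (\<lambda>k. k \<noteq> i) (machine_seq N \<pi> \<sigma> (\<sigma> i))"

lemma completion_eq_run_predecessors: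
  "completion N s \<pi> p \<sigma> i = run p (s (\<sigma> i)) 0 (predecessors N \<pi> \<sigma> i @ [i])"
  by (simp add: completion_def predecessors_def)

lemma set_predecessors:
  "priority_lists N M \<pi> \<Longrightarrow> \<sigma> i \<in> M \<Longrightarrow>
    set (predecessors N \<pi> \<sigma> i) \<subseteq> {k \<in> N - {i}. \<sigma> k = \<sigma> i}"
  unfolding predecessors_def by (auto simp: set_machine_seq dest: set_takeWhileD)

lemma distinct_predecessors:
  "priority_lists N M \<pi> \<Longrightarrow> \<sigma> i \<in> M \<Longrightarrow> distinct (predecessors N \<pi> \<sigma> i)"
  unfolding predecessors_def by (simp add: distinct_machine_seq)

lemma completion_le_makespan:
  "finite N \<Longrightarrow> i \<in> N \<Longrightarrow> completion N s \<pi> p \<sigma> i \<le> makespan N s \<pi> p \<sigma>"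
  by (simp add: makespan_def)

lemma makespan_nonneg: "finite N \<Longrightarrow> 0 \<le> makespan N s \<pi> p \<sigma>"
  by (simp add: makespan_def)

lemma OPT_attained:
  assumes "finite N" and "finite M" and "M \<noteq> {}"
  obtains \<sigma> where "\<sigma> \<in> profiles N M" and "makespan N s \<pi> p \<sigma> = OPT N M s \<pi> p"
proof -
  have "finite (profiles N M)" and "profiles N M \<noteq> {}"
    using assms by (simp_all add: profiles_def finite_PiE PiE_eq_empty_iff)
  then have "OPT N M s \<pi> p \<in> makespan N s \<pi> p ` profiles N M"
    unfolding OPT_def by (intro Min_in) auto
  then show ?thesis
    using that by auto
qed

lemma run_machine_seq_le_makespan:
  assumes "finite N" and "priority_lists N M \<pi>" and "j \<in> M"
  shows "run p (s j) 0 (machine_seq N \<pi> \<sigma> j) \<le> makespan N s \<pi> p \<sigma>"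
proof (cases "machine_seq N \<pi> \<sigma> j" rule: rev_cases)
  case Nil
  then show ?thesis
    using makespan_nonneg[OF \<open>finite N\<close>] by simp
next
  case (snoc ys i)
  then have "i \<in> N" and "\<sigma> i = j"
    using set_machine_seq[OF assms(2,3), of \<sigma>] by auto
  moreover have "predecessors N \<pi> \<sigma> i = ys"
    using snoc distinct_machine_seq[OF assms(2,3), of \<sigma>] \<open>\<sigma> i = j\<close>
    unfolding predecessors_def by (simp, subst takeWhile_append2) auto
  ultimately show ?thesis
    using completion_le_makespan[OF \<open>finite N\<close>] snoc
    by (metis completion_eq_run_predecessors)
qed

lemma machine_work_le_makespan:
  assumes "finite N" and "priority_lists N M \<pi>" and "j \<in> M" and "0 < s j"
    and nonneg: "\<And>i t. i \<in> N \<Longrightarrow> 0 \<le> p i t"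
    and antimono: "\<And>i. i \<in> N \<Longrightarrow> antimono (p i)"
  shows "(\<Sum>i | i \<in> N \<and> \<sigma> i = j. p i (makespan N s \<pi> p \<sigma>) / s j) \<le> makespan N s \<pi> p \<sigma>"
proof -
  let ?T = "makespan N s \<pi> p \<sigma>" and ?xs = "machine_seq N \<pi> \<sigma> j"
  have set_xs: "set ?xs = {i \<in> N. \<sigma> i = j}"
    using set_machine_seq[OF assms(2,3)] .
  have "(\<Sum>i | i \<in> N \<and> \<sigma> i = j. p i ?T / s j) = (\<Sum>i\<leftarrow>?xs. p i ?T / s j)"
    unfolding sum_list_distinct_conv_sum_set[OF distinct_machine_seq[OF assms(2,3)]] set_xs ..
  also have "\<dots> \<le> run p (s j) 0 ?xs"
    using sum_le_run[of "s j" ?xs p 0 ?T] run_machine_seq_le_makespan[OF assms(1-3)]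
      set_xs \<open>0 < s j\<close> nonneg antimono by simp
  also have "\<dots> \<le> ?T"
    using run_machine_seq_le_makespan[OF assms(1-3)] .
  finally show ?thesis .
qed

lemma deviation_completion_le:
  assumes "finite N" and "priority_lists N M \<pi>" and "j \<in> M" and "0 < s j"
    and "k \<in> N" and "0 \<le> T"
    and nonneg: "\<And>i t. i \<in> N \<Longrightarrow> 0 \<le> p i t"
    and antimono: "\<And>i. i \<in> N \<Longrightarrow> antimono (p i)"
    and mono: "\<And>i. i \<in> N \<Longrightarrow> mono (\<lambda>t. t + p i t / s j)"
  shows "completion N s \<pi> p (\<sigma>(k := j)) k
           \<le> T + (\<Sum>i | i \<in> N - {k} \<and> \<sigma> i = j. p i T / s j) + p k T / s j"
proof -
  let ?H = "predecessors N \<pi> (\<sigma>(k := j)) k" and ?g = "\<lambda>i. p i T / s j"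
  have set_H: "set ?H \<subseteq> {i \<in> N - {k}. \<sigma> i = j}"
    using set_predecessors[OF assms(2), of "\<sigma>(k := j)" k] \<open>j \<in> M\<close> by auto
  have "completion N s \<pi> p (\<sigma>(k := j)) k = run p (s j) 0 (?H @ [k])"
    by (simp add: completion_eq_run_predecessors)
  also have "\<dots> \<le> max 0 T + (\<Sum>i\<leftarrow>?H @ [k]. ?g i)"
    using set_H \<open>k \<in> N\<close> by (intro run_le_max_plus_sum \<open>0 < s j\<close> nonneg antimono mono) auto
  also have "\<dots> = T + sum ?g (set ?H) + ?g k"
    using \<open>0 \<le> T\<close> distinct_predecessors[OF assms(2), of "\<sigma>(k := j)" k] \<open>j \<in> M\<close>
    by (simp add: sum_list_distinct_conv_sum_set)
  also have "sum ?g (set ?H) \<le> (\<Sum>i | i \<in> N - {k} \<and> \<sigma> i = j. ?g i)"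
    using set_H \<open>finite N\<close> nonneg \<open>0 < s j\<close> by (intro sum_mono2) auto
  finally show ?thesis by simp
qed

lemma total_work_le_makespan:
  fixes s :: real
  assumes "finite N" and "finite M" and "priority_lists N M \<pi>" and "0 < s"
    and "\<sigma> \<in> profiles N M"
    and nonneg: "\<And>i t. i \<in> N \<Longrightarrow> 0 \<le> p i t"
    and antimono: "\<And>i. i \<in> N \<Longrightarrow> antimono (p i)"
  shows "(\<Sum>i\<in>N. p i (makespan N (\<lambda>_. s) \<pi> p \<sigma>) / s) \<le> real (card M) * makespan N (\<lambda>_. s) \<pi> p \<sigma>"
proof -
  let ?T = "makespan N (\<lambda>_. s) \<pi> p \<sigma>"
  have "\<sigma> ` N \<subseteq> M"
    using \<open>\<sigma> \<in> profiles N M\<close> by (auto simp: profiles_def)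
  then have "(\<Sum>i\<in>N. p i ?T / s) = (\<Sum>j\<in>M. \<Sum>i | i \<in> N \<and> \<sigma> i = j. p i ?T / s)"
    by (rule sum.group[OF assms(1,2), symmetric])
  also have "\<dots> \<le> (\<Sum>j\<in>M. ?T)"
    using machine_work_le_makespan[OF assms(1,3), of _ "\<lambda>_. s"] assms(4) nonneg antimono
    by (intro sum_mono) auto
  finally show ?thesis by simp
qed

lemma job_work_le_makespan:
  fixes s :: real
  assumes "finite N" and "priority_lists N M \<pi>" and "0 < s"
    and "\<sigma> \<in> profiles N M" and "k \<in> N"
    and nonneg: "\<And>i t. i \<in> N \<Longrightarrow> 0 \<le> p i t"
    and antimono: "\<And>i. i \<in> N \<Longrightarrow> antimono (p i)"
  shows "p k (makespan N (\<lambda>_. s) \<pi> p \<sigma>) / s \<le> makespan N (\<lambda>_. s) \<pi> p \<sigma>"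
proof -
  let ?T = "makespan N (\<lambda>_. s) \<pi> p \<sigma>"
  have "\<sigma> k \<in> M"
    using assms(4,5) by (auto simp: profiles_def)
  have "p k ?T / s \<le> (\<Sum>i | i \<in> N \<and> \<sigma> i = \<sigma> k. p i ?T / s)"
    using assms(1,3,5) nonneg by (intro member_le_sum) auto
  also have "\<dots> \<le> ?T"
    using machine_work_le_makespan[OF assms(1,2) \<open>\<sigma> k \<in> M\<close>, of "\<lambda>_. s"] assms(3) nonneg antimono
    by simp
  finally show ?thesis .
qed

lemma NE_completion_le:
  fixes s T :: real
  assumes "finite N" and "finite M" and "priority_lists N M \<pi>" and "0 < s"
    and NE: "is_NE N M (\<lambda>_. s) \<pi> p \<sigma>" and "k \<in> N" and "0 \<le> T"
    and nonneg: "\<And>i t. i \<in> N \<Longrightarrow> 0 \<le> p i t"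
    and antimono: "\<And>i. i \<in> N \<Longrightarrow> antimono (p i)"
    and mono: "\<And>i. i \<in> N \<Longrightarrow> mono (\<lambda>t. t + p i t / s)"
    and total_work: "(\<Sum>i\<in>N. p i T / s) \<le> real (card M) * T"
    and job_work: "p k T / s \<le> T"
  shows "real (card M) * completion N (\<lambda>_. s) \<pi> p \<sigma> k \<le> (3 * real (card M) - 1) * T"
proof -
  let ?C = "completion N (\<lambda>_. s) \<pi> p" and ?g = "\<lambda>i. p i T / s" and ?m = "real (card M)"
  have "\<sigma> ` N \<subseteq> M"
    using NE by (auto simp: is_NE_def profiles_def)
  then have "1 \<le> ?m"
    using \<open>k \<in> N\<close> \<open>finite M\<close> by (auto simp: Suc_le_eq card_gt_0_iff)
  have "?m * ?C \<sigma> k = (\<Sum>j\<in>M. ?C \<sigma> k)"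
    by simp
  also have "\<dots> \<le> (\<Sum>j\<in>M. ?C (\<sigma>(k := j)) k)"
    using NE \<open>k \<in> N\<close> by (intro sum_mono) (simp add: is_NE_def)
  also have "\<dots> \<le> (\<Sum>j\<in>M. T + (\<Sum>i | i \<in> N - {k} \<and> \<sigma> i = j. ?g i) + ?g k)"
    using assms(1,3,4,6,7) nonneg antimono mono
    by (intro sum_mono deviation_completion_le) auto
  also have "\<dots> = ?m * T + (\<Sum>i\<in>N - {k}. ?g i) + ?m * ?g k"
    using \<open>\<sigma> ` N \<subseteq> M\<close> sum.group[of "N - {k}" M \<sigma> ?g] assms(1,2)
    by (auto simp: sum.distrib)
  also have "\<dots> = ?m * T + (\<Sum>i\<in>N. ?g i) + (?m - 1) * ?g k"
    using sum.remove[OF assms(1,6), of ?g] by (simp add: left_diff_distrib diff_divide_distrib)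
  also have "\<dots> \<le> ?m * T + ?m * T + (?m - 1) * T"
    using total_work job_work \<open>1 \<le> ?m\<close> by (intro add_mono mult_left_mono) auto
  finally show ?thesis
    by (simp add: algebra_simps)
qed

lemma NE_makespan_le:
  fixes s :: real
  assumes "finite N" and "finite M" and "M \<noteq> {}" and "priority_lists N M \<pi>" and "0 < s"
    and NE: "is_NE N M (\<lambda>_. s) \<pi> p \<sigma>"
    and nonneg: "\<And>i t. i \<in> N \<Longrightarrow> 0 \<le> p i t"
    and antimono: "\<And>i. i \<in> N \<Longrightarrow> antimono (p i)"
    and mono: "\<And>i. i \<in> N \<Longrightarrow> mono (\<lambda>t. t + p i t / s)"
  shows "makespan N (\<lambda>_. s) \<pi> p \<sigma> \<le> (3 - 1 / real (card M)) * OPT N M (\<lambda>_. s) \<pi> p"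
proof -
  define m where "m = real (card M)"
  define Q where "Q = OPT N M (\<lambda>_. s) \<pi> p"
  have "1 \<le> m"
    using assms(2,3) by (simp add: m_def Suc_le_eq card_gt_0_iff)
  obtain \<sigma>\<^sub>o\<^sub>p\<^sub>t where opt: "\<sigma>\<^sub>o\<^sub>p\<^sub>t \<in> profiles N M" and makespan_opt: "makespan N (\<lambda>_. s) \<pi> p \<sigma>\<^sub>o\<^sub>p\<^sub>t = Q"
    using OPT_attained[OF assms(1-3)] unfolding Q_def by blast
  have "0 \<le> Q"
    using makespan_nonneg[OF assms(1)] makespan_opt by metis
  have "completion N (\<lambda>_. s) \<pi> p \<sigma> k \<le> (3 - 1 / m) * Q" if "k \<in> N" for k
  proof -
    have "m * completion N (\<lambda>_. s) \<pi> p \<sigma> k \<le> (3 * m - 1) * Q"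
      unfolding m_def
      using NE_completion_le[OF assms(1,2,4,5) NE that \<open>0 \<le> Q\<close> nonneg antimono mono]
        total_work_le_makespan[where p = p, OF assms(1,2,4,5) opt nonneg antimono]
        job_work_le_makespan[where p = p, OF assms(1,4,5) opt that nonneg antimono]
      by (simp add: makespan_opt)
    also have "\<dots> = m * ((3 - 1 / m) * Q)"
      using \<open>1 \<le> m\<close> by (simp add: field_simps)
    finally show ?thesis
      using \<open>1 \<le> m\<close> by simp
  qed
  moreover have "0 \<le> (3 - 1 / m) * Q"
  proof -
    have "1 / m \<le> 1"
      using \<open>1 \<le> m\<close> by simp
    then show ?thesis
      using \<open>0 \<le> Q\<close> by simp
  qed
  ultimately show ?thesis
    unfolding makespan_def m_def Q_def using assms(1) by (auto intro!: Max.boundedI)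
qed

theorem theorem12:
  fixes N :: "'j set" and M :: "'m set" and s :: real
    and \<pi> :: "'m \<Rightarrow> 'j \<Rightarrow> nat" and \<tau> b a :: "'j \<Rightarrow> real" and \<sigma> :: "'j \<Rightarrow> 'm"
  assumes "finite N" and "finite M" and "card M \<ge> 2"
    and "s > 0"
    and "\<And>j. j \<in> M \<Longrightarrow> bij_betw (\<pi> j) N {1..card N}"
    and "\<And>i. i \<in> N \<Longrightarrow> \<tau> i > 0 \<and> b i \<ge> 0 \<and> 0 \<le> a i \<and> a i \<le> s"
    and "is_NE N M (\<lambda>_. s) \<pi> (\<lambda>i. neg_det (\<tau> i) (b i) (a i)) \<sigma>"
  shows "makespan N (\<lambda>_. s) \<pi> (\<lambda>i. neg_det (\<tau> i) (b i) (a i)) \<sigma>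
         \<le> (3 - 1 / real (card M)) * OPT N M (\<lambda>_. s) \<pi> (\<lambda>i. neg_det (\<tau> i) (b i) (a i))"
proof -
  define p where "p = (\<lambda>i. neg_det (\<tau> i) (b i) (a i))"
  have "M \<noteq> {}"
    using assms(3) by auto
  moreover have "priority_lists N M \<pi>"
    using assms(5) by (simp add: priority_lists_def)
  moreover have "is_NE N M (\<lambda>_. s) \<pi> p \<sigma>"
    using assms(7) by (simp add: p_def)
  moreover have "\<And>i t. i \<in> N \<Longrightarrow> 0 \<le> p i t"
    using assms(6) by (simp add: p_def neg_det_nonneg less_imp_le)
  moreover have "\<And>i. i \<in> N \<Longrightarrow> antimono (p i)"
    using assms(6) by (simp add: p_def antimono_neg_det)
  moreover have "\<And>i. i \<in> N \<Longrightarrow> mono (\<lambda>t. t + p i t / s)"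
    using assms(4,6) by (simp add: p_def mono_completion_neg_det)
  ultimately show ?thesis
    using NE_makespan_le[OF assms(1,2)] assms(4) unfolding p_def by blast
qed

end
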